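(* Let $\beta\ge2$ and let $T\ge\beta$ be an even integer. For $b\in\{0,1\}$ let $\mathcal{L}^b$ be the LDS on $\mathbb{R}$ with dynamics $x_{t+1}=x_t-\frac\beta Tu_t+w_t^b$, initial state $x_1=1$, cost functions $c_t(x,u):=|x|+|u|$ if $t>T/2$ and $c_t(x,u):=0$ otherwise, perturbations $w_t^0:=0$ for all $t$, and $w_t^1:=-1$ if $t=T/2$, $w_t^1:=0$ otherwise. Let $\mathrm{Alg}$ be any randomized algorithm for online control and $b\in\{0,1\}$. Then the (random) trajectory $(x_t,u_t)_{t=1}^T$ produced by $\mathrm{Alg}$ in $\mathcal{L}^b$ satisfies, with probability $1$, $$\sum_{t=1}^Tc_t(x_t,u_t)=\sum_{t=T/2+1}^T(|x_t|+|u_t|)\ge\frac{T}{2\beta}|x_{T/2+1}|.$$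
   Context: Online control protocol: at each step $t$ the algorithm observes $x_t$, chooses $u_t\in\mathbb{R}$, then the cost $c_t(x_t,u_t)$ is incurred and the state evolves by the stated dynamics. *)

theory Defs
  imports "HOL-Probability.Probability"
begin

definition pert :: "nat \<Rightarrow> nat \<Rightarrow> nat \<Rightarrow> real" where
  "pert b T t = (if b = 1 \<and> t = T div 2 then -1 else 0)"

definition cost :: "nat \<Rightarrow> nat \<Rightarrow> real \<Rightarrow> real \<Rightarrow> real" where
  "cost T t x u = (if real t > real T / 2 then \<bar>x\<bar> + \<bar>u\<bar> else 0)"

text \<open>A (deterministic, for a fixed random seed) online control algorithm is
  A :: nat \<Rightarrow> real list \<Rightarrow> real : at time t it sees the observed states
  [x_1, ..., x_t] and outputs u_t.  hist beta T b A n = [x_1, ..., x_(n+1)]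
  for the dynamics x_(t+1) = x_t - (beta/T) u_t + w^b_t, x_1 = 1.\<close>
fun hist :: "real \<Rightarrow> nat \<Rightarrow> nat \<Rightarrow> (nat \<Rightarrow> real list \<Rightarrow> real) \<Rightarrow> nat \<Rightarrow> real list" where
  "hist \<beta> T b A 0 = [1]"
| "hist \<beta> T b A (Suc n) =
     (let h = hist \<beta> T b A n
      in h @ [last h - \<beta> / real T * A (Suc n) h + pert b T (Suc n)])"

definition state :: "real \<Rightarrow> nat \<Rightarrow> nat \<Rightarrow> (nat \<Rightarrow> real list \<Rightarrow> real) \<Rightarrow> nat \<Rightarrow> real" where
  "state \<beta> T b A t = hist \<beta> T b A (t - 1) ! (t - 1)"

definition ctrl :: "real \<Rightarrow> nat \<Rightarrow> nat \<Rightarrow> (nat \<Rightarrow> real list \<Rightarrow> real) \<Rightarrow> nat \<Rightarrow> real" where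
  "ctrl \<beta> T b A t = A t (hist \<beta> T b A (t - 1))"

end

theory Submission
  imports Defs
begin

text \<open>After time T/2 there is no perturbation, so each unit of cost spent on the control
  moves the state by only \<beta>/T. Hence either the controls alone already cost T/(2\<beta>) times
  the state x at time T/2+1, or every later state keeps at least half of the modulus of x,
  which over the T/2 remaining steps costs T/4 \<ge> T/(2\<beta>) times that modulus.
  The argument applies to every realisation of the algorithm's randomness and to both
  values of b, so the bound holds surely.\<close>

lemma length_hist: "length (hist \<beta> T b A n) = Suc n"
  by (induction n) (auto simp: Let_def)

lemma state_Suc:
  assumes "t \<ge> 1"
  shows "state \<beta> T b A (Suc t) = state \<beta> T b A t - \<beta> / real T * ctrl \<beta> T b A t + pert b T t"
proof -
  obtain n where t: "t = Suc n" using assms by (cases t) auto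
  have "last (hist \<beta> T b A n) = hist \<beta> T b A n ! n"
    by (simp add: last_conv_nth length_hist flip: length_0_conv)
  then show ?thesis
    unfolding state_def ctrl_def t by (simp add: Let_def nth_append length_hist)
qed

lemma sum_cost_eq:
  "(\<Sum>t = 1..T. cost T t (x t) (u t)) = (\<Sum>t = T div 2 + 1..T. \<bar>x t\<bar> + \<bar>u t\<bar>)"
proof -
  have "{1..T} = {1..T div 2} \<union> {T div 2 + 1..T}" by auto
  then have "(\<Sum>t = 1..T. cost T t (x t) (u t))
      = (\<Sum>t = 1..T div 2. cost T t (x t) (u t)) + (\<Sum>t = T div 2 + 1..T. cost T t (x t) (u t))"
    by (simp add: sum.union_disjoint)
  also have "(\<Sum>t = 1..T div 2. cost T t (x t) (u t)) = 0"
    by (rule sum.neutral) (auto simp: cost_def)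
  also have "(\<Sum>t = T div 2 + 1..T. cost T t (x t) (u t)) = (\<Sum>t = T div 2 + 1..T. \<bar>x t\<bar> + \<bar>u t\<bar>)"
    by (rule sum.cong) (auto simp: cost_def)
  finally show ?thesis by simp
qed

lemma abs_start_minus_sum_le_abs:
  fixes x u :: "nat \<Rightarrow> real"
  assumes step: "\<And>t. a \<le> t \<Longrightarrow> t < n \<Longrightarrow> x (Suc t) = x t - c * u t"
    and "c \<ge> 0" and "a \<le> t" and "t \<le> n"
  shows "\<bar>x a\<bar> - c * (\<Sum>k = a..<t. \<bar>u k\<bar>) \<le> \<bar>x t\<bar>"
  using \<open>a \<le> t\<close> \<open>t \<le> n\<close>
proof (induction t rule: dec_induct)
  case base
  then show ?case by simp
next
  case (step k)
  have "\<bar>x k\<bar> - c * \<bar>u k\<bar> \<le> \<bar>x (Suc k)\<bar>"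
    using assms(1)[of k] step.hyps(1) step.prems abs_triangle_ineq2[of "x k" "c * u k"]
      \<open>c \<ge> 0\<close> by (simp add: abs_mult)
  then show ?case using step by (simp add: algebra_simps)
qed

lemma min_length_inverse_le_sum_abs:
  fixes x u :: "nat \<Rightarrow> real"
  assumes step: "\<And>t. a \<le> t \<Longrightarrow> t < n \<Longrightarrow> x (Suc t) = x t - c * u t"
    and "c > 0"
  shows "min (real (Suc n - a)) (1 / c) * \<bar>x a\<bar> \<le> 2 * (\<Sum>t = a..n. \<bar>x t\<bar> + \<bar>u t\<bar>)"
proof -
  define s where "s = \<bar>x a\<bar>"
  define X where "X = (\<Sum>t = a..n. \<bar>x t\<bar>)"
  define U where "U = (\<Sum>t = a..n. \<bar>u t\<bar>)"
  have "X \<ge> 0" "U \<ge> 0" "s \<ge> 0" by (simp_all add: X_def U_def s_def sum_nonneg)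
  have sum_eq: "(\<Sum>t = a..n. \<bar>x t\<bar> + \<bar>u t\<bar>) = X + U"
    by (simp add: X_def U_def sum.distrib)
  have lower: "s - c * U \<le> \<bar>x t\<bar>" if "t \<in> {a..n}" for t
  proof -
    have "(\<Sum>k = a..<t. \<bar>u k\<bar>) \<le> U"
      unfolding U_def using that by (intro sum_mono2) auto
    then have "s - c * U \<le> s - c * (\<Sum>k = a..<t. \<bar>u k\<bar>)"
      using \<open>c > 0\<close> by (simp add: mult_left_mono)
    also have "\<dots> \<le> \<bar>x t\<bar>"
      unfolding s_def using that \<open>c > 0\<close> by (intro abs_start_minus_sum_le_abs[where x = x and u = u, OF step]) auto
    finally show ?thesis .
  qed
  consider "s \<le> 2 * c * U" | "2 * c * U < s" by linarith
  then show ?thesis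
  proof cases
    case 1
    have "min (real (Suc n - a)) (1 / c) * s \<le> 1 / c * s"
      using \<open>s \<ge> 0\<close> by (intro mult_right_mono) auto
    also have "\<dots> \<le> 2 * U" using 1 \<open>c > 0\<close> by (simp add: field_simps)
    also have "\<dots> \<le> 2 * (X + U)" using \<open>X \<ge> 0\<close> by simp
    finally show ?thesis unfolding sum_eq s_def .
  next
    case 2
    have "min (real (Suc n - a)) (1 / c) * s \<le> real (Suc n - a) * s"
      using \<open>s \<ge> 0\<close> by (intro mult_right_mono) auto
    also have "\<dots> = 2 * (\<Sum>t = a..n. s / 2)" by simp
    also have "\<dots> \<le> 2 * X"
      unfolding X_def using lower 2 by (intro mult_left_mono sum_mono) fastforce+
    also have "\<dots> \<le> 2 * (X + U)" using \<open>U \<ge> 0\<close> by simp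
    finally show ?thesis unfolding sum_eq s_def .
  qed
qed

theorem lemma11:
  fixes \<beta> :: real and T :: nat and b :: nat
    and M :: "'r measure" and Alg :: "'r \<Rightarrow> nat \<Rightarrow> real list \<Rightarrow> real"
  assumes "\<beta> \<ge> 2" and "real T \<ge> \<beta>" and "even T"
    and "b \<in> {0, 1}"
    and "prob_space M"
  shows "AE r in M.
    (\<Sum>t = 1..T. cost T t (state \<beta> T b (Alg r) t) (ctrl \<beta> T b (Alg r) t))
      = (\<Sum>t = T div 2 + 1..T. \<bar>state \<beta> T b (Alg r) t\<bar> + \<bar>ctrl \<beta> T b (Alg r) t\<bar>)
    \<and> (\<Sum>t = T div 2 + 1..T. \<bar>state \<beta> T b (Alg r) t\<bar> + \<bar>ctrl \<beta> T b (Alg r) t\<bar>)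
      \<ge> real T / (2 * \<beta>) * \<bar>state \<beta> T b (Alg r) (T div 2 + 1)\<bar>"
proof (intro always_eventually allI conjI)
  fix r
  let ?x = "state \<beta> T b (Alg r)" and ?u = "ctrl \<beta> T b (Alg r)"
  show "(\<Sum>t = 1..T. cost T t (?x t) (?u t)) = (\<Sum>t = T div 2 + 1..T. \<bar>?x t\<bar> + \<bar>?u t\<bar>)"
    by (rule sum_cost_eq)
  have "real T > 0" using assms(1,2) by linarith
  have "?x (Suc t) = ?x t - \<beta> / real T * ?u t" if "T div 2 + 1 \<le> t" for t
    using state_Suc[of t] that by (simp add: pert_def)
  then have "min (real (Suc T - (T div 2 + 1))) (1 / (\<beta> / real T)) * \<bar>?x (T div 2 + 1)\<bar>
      \<le> 2 * (\<Sum>t = T div 2 + 1..T. \<bar>?x t\<bar> + \<bar>?u t\<bar>)"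
    using assms(1) \<open>real T > 0\<close> by (intro min_length_inverse_le_sum_abs) auto
  moreover have "min (real (Suc T - (T div 2 + 1))) (1 / (\<beta> / real T)) = real T / \<beta>"
    using assms(1,3) \<open>real T > 0\<close> by (auto simp: min_def field_simps elim!: evenE)
  ultimately have "real T / \<beta> * \<bar>?x (T div 2 + 1)\<bar> \<le> 2 * (\<Sum>t = T div 2 + 1..T. \<bar>?x t\<bar> + \<bar>?u t\<bar>)"
    by simp
  then show "real T / (2 * \<beta>) * \<bar>?x (T div 2 + 1)\<bar> \<le> (\<Sum>t = T div 2 + 1..T. \<bar>?x t\<bar> + \<bar>?u t\<bar>)"
    by (simp add: mult.commute flip: divide_divide_eq_left)
qed

end
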